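(* Let $Y$ be the limiting Quicksort random variable and $\phi(t)=\mathbf{E}e^{itY}$ its characteristic function. For every real $p\ge 0$ the quantity $c_p:=\sup_{t\in\mathbb{R}}|t|^p|\phi(t)|$ satisfies $0<c_p<\infty$; thus $c_p$ is the smallest constant such that $|\phi(t)|\le c_p|t|^{-p}$ for all $t\in\mathbb{R}$. Moreover, $c_0=1$, $c_{1/2}\le 2$, $c_{3/4}\le\sqrt{8\pi}$, $c_1\le 4\pi$, $c_{3/2}<187$, $c_{5/2}<103215$, $c_{7/2}<197102280$, and $$c_{p_1}^{1/p_1}\le c_{p_2}^{1/p_2}\quad (0<p_1\le p_2),\qquad c_{p+1}\le 2^{p+1}c_p^{1+1/p}\,\frac{p}{p-1}\quad (p>1),\qquad c_p\le 2^{p^2+6p}\quad (p>0).$$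
   Context: Let $g(u):=2u\ln u+2(1-u)\ln(1-u)+1$ for $u\in(0,1)$. The limiting Quicksort random variable $Y$ is the limit in distribution of $(X_n-\mathbf{E}X_n)/n$, where $X_n$ is the number of comparisons used by randomized Quicksort on $n$ distinct numbers; equivalently, its law is the unique law with $\mathbf{E}Y=0$ and finite variance satisfying $Y\overset{d}{=}UY+(1-U)Z+g(U)$, where on the right $U,Y,Z$ are independent, $Z\overset{d}{=}Y$ and $U$ is uniform on $(0,1)$. $Y$ has finite moment generating function everywhere. *)

theory Defs
  imports "HOL-Probability.Probability"
begin

definition qs_g :: "real \<Rightarrow> real" where
  "qs_g u = 2 * u * ln u + 2 * (1 - u) * ln (1 - u) + 1"

definition quicksort_limit_law :: "real measure \<Rightarrow> bool" where
  "quicksort_limit_law M \<longleftrightarrow>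
     real_distribution M \<and>
     integrable M (\<lambda>x. x) \<and> (\<integral>x. x \<partial>M) = 0 \<and>
     integrable M (\<lambda>x. x ^ 2) \<and>
     M = distr (uniform_measure lborel {0<..<1} \<Otimes>\<^sub>M (M \<Otimes>\<^sub>M M)) borel
           (\<lambda>(u, y, z). u * y + (1 - u) * z + qs_g u)"

text \<open>|t|^p with the convention |t|^0 = 1 (also at t = 0).\<close>
definition abs_pow :: "real \<Rightarrow> real \<Rightarrow> real" where
  "abs_pow t p = (if p = 0 then 1 else \<bar>t\<bar> powr p)"

definition qs_c :: "real measure \<Rightarrow> real \<Rightarrow> real" where
  "qs_c M p = (SUP t. abs_pow t p * cmod (char M t))"

end

(*
  Write psi(t) = |E exp(itY)|.  Conditioning the fixed-point equation on the two copies Y, Z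
  bounds psi(t) by oscillatory integrals of exp(it(u a + (1 - u) b + g(u))) over u in [0, 1],
  whose phase has second derivative at least 8|t|; van der Corput's lemma gives
  psi(t) <= 2 / sqrt |t|.  Conditioning on the pivot U instead gives the smoothing inequality
  psi(t) <= int_0^1 psi(tu) psi(t(1 - u)) du.  Feeding a bound psi(t) <= C |t|^-p into it
  doubles the exponent (a Beta integral, for p < 1), and once p > 1 makes psi integrable it
  raises the exponent by one.  Starting from p = 1/2 this reaches every exponent, and
  interpolating between exponents (using psi <= 1) gives the monotonicity of c_p^(1/p).
  The explicit constants come from running these steps through the exponents
  1/2, 1, 3/4, 3/2, 5/2, 7/2, with a polynomial majorant of (1 - u)^(-3/4) for the Beta
  integral at p = 3/4.
*)

theory Submission
  imports Defs
begin

section \<open>Van der Corput estimates\<close>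

lemma has_vector_derivative_iexp_comp:
  assumes "(F has_real_derivative D) (at u within S)"
  shows "((\<lambda>u. iexp (F u)) has_vector_derivative D *\<^sub>R (\<i> * iexp (F u))) (at u within S)"
  using vector_diff_chain_within[OF assms[unfolded has_real_derivative_iff_has_vector_derivative]
      has_vector_derivative_iexp]
  by (simp add: o_def)

lemma integral_iexp_by_parts:
  fixes F F' F'' :: "real \<Rightarrow> real"
  assumes "c \<le> d"
    and F: "\<And>u. u \<in> {c..d} \<Longrightarrow> (F has_real_derivative F' u) (at u)"
    and F': "\<And>u. u \<in> {c..d} \<Longrightarrow> (F' has_real_derivative F'' u) (at u)"
    and "continuous_on {c..d} F''" and F'_nz: "\<And>u. u \<in> {c..d} \<Longrightarrow> F' u \<noteq> 0"
  shows "integral {c..d} (\<lambda>u. iexp (F u)) =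
           iexp (F d) * (- \<i> * complex_of_real (1 / F' d))
           - iexp (F c) * (- \<i> * complex_of_real (1 / F' c))
           - integral {c..d} (\<lambda>u. iexp (F u) * (\<i> * (F'' u / F' u ^ 2)))"
proof -
  define g where "g u = - \<i> * complex_of_real (1 / F' u)" for u
  have cont_F: "continuous_on {c..d} F" and cont_F': "continuous_on {c..d} F'"
    using F F' by (meson DERIV_isCont continuous_at_imp_continuous_on)+
  define I where "I = integral {c..d} (\<lambda>u. iexp (F u) * (\<i> * (F'' u / F' u ^ 2)))"
  have "((\<lambda>u. (F' u *\<^sub>R (\<i> * iexp (F u))) * g u) has_integral
      iexp (F d) * g d - iexp (F c) * g c - I) {c..d}"
  proof (rule integration_by_parts[OF bounded_bilinear_mult \<open>c \<le> d\<close>])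
    show "continuous_on {c..d} (\<lambda>u. iexp (F u))" by (intro continuous_intros cont_F)
    show "continuous_on {c..d} g"
      unfolding g_def using F'_nz by (intro continuous_intros cont_F') auto
    fix u assume u: "u \<in> {c..d}"
    show "((\<lambda>u. iexp (F u)) has_vector_derivative F' u *\<^sub>R (\<i> * iexp (F u))) (at u)"
      by (rule has_vector_derivative_iexp_comp[OF F[OF u]])
    have "((\<lambda>u. 1 / F' u) has_real_derivative - (F'' u / F' u ^ 2)) (at u)"
      using F'[OF u] F'_nz[OF u] by (auto intro!: derivative_eq_intros simp: power2_eq_square)
    from has_vector_derivative_mult_right[OF has_vector_derivative_of_real[OF this], where a="- \<i>"]
    show "(g has_vector_derivative \<i> * (F'' u / F' u ^ 2)) (at u)"
      unfolding g_def by simp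
  next
    have "(\<lambda>u. iexp (F u) * (\<i> * (F'' u / F' u ^ 2))) integrable_on {c..d}"
      using F'_nz by (intro integrable_continuous_interval continuous_intros cont_F cont_F'
          \<open>continuous_on {c..d} F''\<close>) auto
    then show "((\<lambda>u. iexp (F u) * (\<i> * (F'' u / F' u ^ 2))) has_integral
        iexp (F d) * g d - iexp (F c) * g c - (iexp (F d) * g d - iexp (F c) * g c - I)) {c..d}"
      by (simp add: I_def has_integral_integral)
  qed
  moreover have "(F' u *\<^sub>R (\<i> * iexp (F u))) * g u = iexp (F u)" if "u \<in> {c..d}" for u
    using F'_nz[OF that] by (simp add: g_def scaleR_conv_of_real field_simps)
  ultimately show ?thesis
    unfolding I_def g_def by (metis (no_types, lifting) has_integral_eq integral_unique)
qed

lemma norm_integral_iexp_le_boundary_terms: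
  fixes F F' F'' :: "real \<Rightarrow> real"
  assumes "c \<le> d"
    and F: "\<And>u. u \<in> {c..d} \<Longrightarrow> (F has_real_derivative F' u) (at u)"
    and F': "\<And>u. u \<in> {c..d} \<Longrightarrow> (F' has_real_derivative F'' u) (at u)"
    and "continuous_on {c..d} F''" and F'_nz: "\<And>u. u \<in> {c..d} \<Longrightarrow> F' u \<noteq> 0"
    and F''_nonneg: "\<And>u. u \<in> {c..d} \<Longrightarrow> 0 \<le> F'' u"
  shows "norm (integral {c..d} (\<lambda>u. iexp (F u)))
           \<le> 1 / \<bar>F' d\<bar> + 1 / \<bar>F' c\<bar> + (1 / F' c - 1 / F' d)"
proof -
  define h where "h u = F'' u / F' u ^ 2" for u
  have h_integral: "(h has_integral (- (1 / F' d)) - (- (1 / F' c))) {c..d}"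
  proof (rule fundamental_theorem_of_calculus[OF \<open>c \<le> d\<close>, where f="\<lambda>u. - (1 / F' u)"])
    fix u assume u: "u \<in> {c..d}"
    have "((\<lambda>u. - (1 / F' u)) has_real_derivative h u) (at u)"
      using F'[OF u] F'_nz[OF u] by (auto intro!: derivative_eq_intros simp: h_def power2_eq_square)
    then show "((\<lambda>u. - (1 / F' u)) has_vector_derivative h u) (at u within {c..d})"
      by (simp add: has_real_derivative_iff_has_vector_derivative has_vector_derivative_at_within)
  qed
  have "norm (integral {c..d} (\<lambda>u. iexp (F u) * (\<i> * h u))) \<le> integral {c..d} h"
  proof (rule integral_norm_bound_integral)
    have "continuous_on {c..d} F" "continuous_on {c..d} F'"
      using F F' by (meson DERIV_isCont continuous_at_imp_continuous_on)+
    then show "(\<lambda>u. iexp (F u) * (\<i> * h u)) integrable_on {c..d}"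
      unfolding h_def using F'_nz
      by (intro integrable_continuous_interval continuous_intros \<open>continuous_on {c..d} F''\<close>) auto
  qed (use h_integral F''_nonneg in \<open>auto simp: norm_mult norm_divide norm_power h_def\<close>)
  then have remainder: "norm (integral {c..d} (\<lambda>u. iexp (F u) * (\<i> * h u))) \<le> 1 / F' c - 1 / F' d"
    using h_integral by (simp add: integral_unique)
  have boundary: "norm (iexp (F u) * (- \<i> * complex_of_real (1 / F' u))) = 1 / \<bar>F' u\<bar>" for u
    by (simp add: norm_mult norm_divide)
  have "norm (integral {c..d} (\<lambda>u. iexp (F u))) \<le>
      norm (iexp (F d) * (- \<i> * complex_of_real (1 / F' d)))
      + norm (iexp (F c) * (- \<i> * complex_of_real (1 / F' c)))
      + norm (integral {c..d} (\<lambda>u. iexp (F u) * (\<i> * h u)))"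
    unfolding h_def
    by (subst integral_iexp_by_parts[OF \<open>c \<le> d\<close> F F' \<open>continuous_on {c..d} F''\<close> F'_nz]) norm
  then show ?thesis
    using remainder boundary[of c] boundary[of d] by linarith
qed

lemma norm_integral_iexp_first_derivative_test:
  fixes F F' F'' :: "real \<Rightarrow> real"
  assumes "c \<le> d" and "\<delta> > 0"
    and F: "\<And>u. u \<in> {c..d} \<Longrightarrow> (F has_real_derivative F' u) (at u)"
    and F': "\<And>u. u \<in> {c..d} \<Longrightarrow> (F' has_real_derivative F'' u) (at u)"
    and "continuous_on {c..d} F''" and "\<And>u. u \<in> {c..d} \<Longrightarrow> 0 \<le> F'' u"
    and F'_large: "(\<forall>u\<in>{c..d}. \<delta> \<le> F' u) \<or> (\<forall>u\<in>{c..d}. F' u \<le> -\<delta>)"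
  shows "norm (integral {c..d} (\<lambda>u. iexp (F u))) \<le> 2 / \<delta>"
proof -
  have "F' u \<noteq> 0" if "u \<in> {c..d}" for u
    using F'_large that \<open>\<delta> > 0\<close> by force
  with assms have "norm (integral {c..d} (\<lambda>u. iexp (F u)))
      \<le> 1 / \<bar>F' d\<bar> + 1 / \<bar>F' c\<bar> + (1 / F' c - 1 / F' d)"
    by (intro norm_integral_iexp_le_boundary_terms)
  also have "\<dots> \<le> 2 / \<delta>"
  proof -
    have "(\<delta> \<le> F' c \<and> \<delta> \<le> F' d) \<or> (F' c \<le> -\<delta> \<and> F' d \<le> -\<delta>)"
      using F'_large \<open>c \<le> d\<close> by auto
    then show ?thesis
    proof
      assume "\<delta> \<le> F' c \<and> \<delta> \<le> F' d"
      then show ?thesis using \<open>\<delta> > 0\<close> by (simp add: frac_le)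
    next
      assume "F' c \<le> -\<delta> \<and> F' d \<le> -\<delta>"
      then show ?thesis using \<open>\<delta> > 0\<close> frac_le[of 2 2 \<delta> "- F' d"] by simp
    qed
  qed
  finally show ?thesis .
qed

lemma norm_integral_le_length:
  fixes f :: "real \<Rightarrow> 'a::banach"
  assumes "a \<le> b" "f integrable_on {a..b}" "\<And>u. u \<in> {a..b} \<Longrightarrow> norm (f u) \<le> 1"
  shows "norm (integral {a..b} f) \<le> b - a"
  using integral_norm_bound_integral[OF assms(2) integrable_const_ivl[of 1 a b] assms(3)] assms(1)
  by simp

lemma norm_integral_split3_le:
  fixes f :: "real \<Rightarrow> 'a::banach"
  assumes "f integrable_on {a..d}" "a \<le> b" "b \<le> c" "c \<le> d"
  shows "norm (integral {a..d} f)
           \<le> norm (integral {a..b} f) + norm (integral {b..c} f) + norm (integral {c..d} f)"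
proof -
  have "integral {a..b} f + integral {b..d} f = integral {a..d} f"
    using assms by (intro Henstock_Kurzweil_Integration.integral_combine) auto
  moreover have "integral {b..c} f + integral {c..d} f = integral {b..d} f"
    using assms
    by (intro Henstock_Kurzweil_Integration.integral_combine integrable_on_subinterval) auto
  ultimately have "integral {a..d} f = integral {a..b} f + (integral {b..c} f + integral {c..d} f)"
    by simp
  moreover have "norm (x + (y + z)) \<le> norm x + norm y + norm z" for x y z :: 'a
    by norm
  ultimately show ?thesis by simp
qed

lemma diff_ge_of_deriv_ge:
  fixes f f' :: "real \<Rightarrow> real"
  assumes "\<And>u. u \<in> {c..d} \<Longrightarrow> (f has_real_derivative f' u) (at u)"
    and "\<And>u. u \<in> {c..d} \<Longrightarrow> lam \<le> f' u" and "c \<le> x" "x \<le> y" "y \<le> d"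
  shows "lam * (y - x) \<le> f y - f x"
proof (cases "x = y")
  case False
  then obtain z where "x < z" "z < y" "f y - f x = (y - x) * f' z"
    using MVT2[of x y f f'] assms by force
  then show ?thesis using assms(2)[of z] assms(3-5) by (simp add: mult.commute mult_right_mono)
qed simp

lemma obtain_small_derivative_interval:
  fixes F' :: "real \<Rightarrow> real"
  assumes "c \<le> d" "\<delta> > 0" "lam > 0" and cont: "continuous_on {c..d} F'"
    and growth: "\<And>x y. c \<le> x \<Longrightarrow> x \<le> y \<Longrightarrow> y \<le> d \<Longrightarrow> lam * (y - x) \<le> F' y - F' x"
  obtains \<alpha> \<beta> where "c \<le> \<alpha>" "\<alpha> \<le> \<beta>" "\<beta> \<le> d" "\<beta> - \<alpha> \<le> 2 * \<delta> / lam"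
    "\<alpha> = c \<or> (\<forall>u\<in>{c..\<alpha>}. F' u \<le> -\<delta>)" "\<beta> = d \<or> (\<forall>u\<in>{\<beta>..d}. \<delta> \<le> F' u)"
proof -
  have mono: "F' x \<le> F' y" if "c \<le> x" "x \<le> y" "y \<le> d" for x y
    using growth[OF that] \<open>lam > 0\<close> that(2) by (smt (verit) mult_nonneg_nonneg)
  consider "F' d \<le> -\<delta>" | "\<delta> \<le> F' c" | "-\<delta> < F' d" "F' c < \<delta>" by linarith
  then show thesis
  proof cases
    case 1
    then show thesis using that[of d d] \<open>c \<le> d\<close> \<open>\<delta> > 0\<close> \<open>lam > 0\<close> mono by force
  next
    case 2
    then show thesis using that[of c c] \<open>c \<le> d\<close> \<open>\<delta> > 0\<close> \<open>lam > 0\<close> mono by force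
  next
    case 3
    obtain \<alpha> where \<alpha>: "c \<le> \<alpha>" "\<alpha> \<le> d" "-\<delta> \<le> F' \<alpha>" "\<alpha> = c \<or> F' \<alpha> = -\<delta>"
    proof (cases "F' c < -\<delta>")
      case True
      then show thesis using IVT'[of F' c "-\<delta>" d] 3 \<open>c \<le> d\<close> cont that by force
    qed (use \<open>c \<le> d\<close> that[of c] in auto)
    obtain \<beta> where \<beta>: "\<alpha> \<le> \<beta>" "\<beta> \<le> d" "F' \<beta> \<le> \<delta>" "\<beta> = d \<or> F' \<beta> = \<delta>"
    proof (cases "\<delta> < F' d")
      case True
      have "F' \<alpha> \<le> \<delta>" using \<alpha> 3 \<open>\<delta> > 0\<close> by auto
      then show thesis
        using IVT'[of F' \<alpha> \<delta> d] True \<alpha> continuous_on_subset[OF cont, of "{\<alpha>..d}"] that by force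
    qed (use \<alpha> that[of d] in auto)
    have "lam * (\<beta> - \<alpha>) \<le> 2 * \<delta>"
      using growth[of \<alpha> \<beta>] \<alpha> \<beta> by linarith
    then have "\<beta> - \<alpha> \<le> 2 * \<delta> / lam" using \<open>lam > 0\<close> by (simp add: field_simps)
    moreover have "\<alpha> = c \<or> (\<forall>u\<in>{c..\<alpha>}. F' u \<le> -\<delta>)"
      using \<alpha> mono by fastforce
    moreover have "\<beta> = d \<or> (\<forall>u\<in>{\<beta>..d}. \<delta> \<le> F' u)"
      using \<alpha> \<beta> mono by (metis atLeastAtMost_iff order_trans)
    ultimately show thesis using that \<alpha> \<beta> by auto
  qed
qed

lemma norm_integral_iexp_second_derivative_test:
  fixes F F' F'' :: "real \<Rightarrow> real"
  assumes "c \<le> d" and "lam > 0" and "\<delta> > 0"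
    and F: "\<And>u. u \<in> {c..d} \<Longrightarrow> (F has_real_derivative F' u) (at u)"
    and F': "\<And>u. u \<in> {c..d} \<Longrightarrow> (F' has_real_derivative F'' u) (at u)"
    and cont: "continuous_on {c..d} F''" and F''_ge: "\<And>u. u \<in> {c..d} \<Longrightarrow> lam \<le> F'' u"
  shows "norm (integral {c..d} (\<lambda>u. iexp (F u))) \<le> 4 / \<delta> + 2 * \<delta> / lam"
proof -
  have "continuous_on {c..d} F'" "continuous_on {c..d} F"
    using F F' by (meson DERIV_isCont continuous_at_imp_continuous_on)+
  then have integrable: "(\<lambda>u. iexp (F u)) integrable_on {c..d}"
    by (intro integrable_continuous_interval continuous_intros)
  have monotone_piece: "norm (integral {x..y} (\<lambda>u. iexp (F u))) \<le> 2 / \<delta>"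
    if "c \<le> x" "x \<le> y" "y \<le> d"
      "x = y \<or> (\<forall>u\<in>{x..y}. \<delta> \<le> F' u) \<or> (\<forall>u\<in>{x..y}. F' u \<le> -\<delta>)" for x y
  proof (cases "x = y")
    case False
    show ?thesis
    proof (rule norm_integral_iexp_first_derivative_test)
      show "continuous_on {x..y} F''" using continuous_on_subset[OF cont] that by auto
    qed (use that False \<open>\<delta> > 0\<close> F F' F''_ge \<open>lam > 0\<close> in \<open>auto intro: order_trans[of 0 lam]\<close>)
  qed (use \<open>\<delta> > 0\<close> in auto)
  obtain \<alpha> \<beta> where split: "c \<le> \<alpha>" "\<alpha> \<le> \<beta>" "\<beta> \<le> d" "\<beta> - \<alpha> \<le> 2 * \<delta> / lam"
    "\<alpha> = c \<or> (\<forall>u\<in>{c..\<alpha>}. F' u \<le> -\<delta>)" "\<beta> = d \<or> (\<forall>u\<in>{\<beta>..d}. \<delta> \<le> F' u)"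
    using obtain_small_derivative_interval[OF \<open>c \<le> d\<close> \<open>\<delta> > 0\<close> \<open>lam > 0\<close>
        \<open>continuous_on {c..d} F'\<close> diff_ge_of_deriv_ge[of c d F' F'' lam, OF F' F''_ge]] by blast
  have "norm (integral {c..d} (\<lambda>u. iexp (F u))) \<le> norm (integral {c..\<alpha>} (\<lambda>u. iexp (F u)))
      + norm (integral {\<alpha>..\<beta>} (\<lambda>u. iexp (F u))) + norm (integral {\<beta>..d} (\<lambda>u. iexp (F u)))"
    using norm_integral_split3_le[OF integrable split(1-3)] .
  also have "\<dots> \<le> 2 / \<delta> + 2 * \<delta> / lam + 2 / \<delta>"
  proof (intro add_mono)
    show "norm (integral {c..\<alpha>} (\<lambda>u. iexp (F u))) \<le> 2 / \<delta>"
      by (rule monotone_piece) (use split in auto)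
    show "norm (integral {\<beta>..d} (\<lambda>u. iexp (F u))) \<le> 2 / \<delta>"
      by (rule monotone_piece) (use split in auto)
    show "norm (integral {\<alpha>..\<beta>} (\<lambda>u. iexp (F u))) \<le> 2 * \<delta> / lam"
      using norm_integral_le_length[OF split(2) integrable_on_subinterval[OF integrable]] split by simp
  qed
  finally show ?thesis by simp
qed

section \<open>Oscillatory integrals with the Quicksort phase\<close>

lemma uniform_measure_01_integral:
  fixes f :: "real \<Rightarrow> 'b::euclidean_space"
  assumes [measurable]: "f \<in> borel_measurable borel" and bounded: "\<And>x. norm (f x) \<le> B"
  shows "integral\<^sup>L (uniform_measure lborel {0<..<1}) f = integral {0..1} f"
    and "f integrable_on {0..1}"
proof -
  have "set_integrable lborel {0<..<1::real} (\<lambda>_. B)"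
    unfolding set_integrable_def by (intro integrable_scaleR_left) (simp add: integrable_indicator_iff)
  then have f: "set_integrable lborel {0<..<1} f"
    by (rule set_integrable_bound)
      (auto intro!: AE_I2 order_trans[OF bounded] simp: set_borel_measurable_def)
  have "uniform_measure lborel {0<..<1::real} = density lborel (\<lambda>x. ennreal (indicator {0<..<1} x))"
    unfolding uniform_measure_def by (simp add: ennreal_indicator divide_ennreal_def)
  then have "integral\<^sup>L (uniform_measure lborel {0<..<1}) f = (LINT x:{0<..<1}|lborel. f x)"
    unfolding set_lebesgue_integral_def by (simp add: integral_density)
  then show "integral\<^sup>L (uniform_measure lborel {0<..<1}) f = integral {0..1} f"
    using set_borel_integral_eq_integral(2)[OF f] by (simp add: integral_open_interval_real)
  show "f integrable_on {0..1}"
    using set_borel_integral_eq_integral(1)[OF f] by (simp add: integrable_on_open_interval_real)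
qed

lemma qs_g_measurable [measurable]: "qs_g \<in> borel_measurable borel"
  unfolding qs_g_def by measurable

lemma qs_g_has_real_derivative:
  assumes "0 < u" "u < 1"
  shows "(qs_g has_real_derivative 2 * ln u - 2 * ln (1 - u)) (at u)"
proof -
  have "(qs_g has_real_derivative
      2 * ln u + 2 * u * (1 / u) + ((-2) * ln (1 - u) + 2 * (1 - u) * (- 1 / (1 - u))) + 0) (at u)"
    unfolding qs_g_def[abs_def] using assms by (auto intro!: derivative_eq_intros)
  moreover have "(2 - 2 * u) / (1 - u) = 2" using assms by (simp add: field_simps)
  ultimately show ?thesis using assms by simp
qed

lemma norm_integral_iexp_qs_phase_interior:
  assumes "t > 0" "0 < c" "c \<le> d" "d < 1"
  shows "norm (integral {c..d} (\<lambda>u. iexp (t * (a * u + qs_g u)))) \<le> 2 / sqrt t"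
proof -
  have "norm (integral {c..d} (\<lambda>u. iexp (t * (a * u + qs_g u))))
      \<le> 4 / (4 * sqrt t) + 2 * (4 * sqrt t) / (8 * t)"
  proof (rule norm_integral_iexp_second_derivative_test[OF \<open>c \<le> d\<close>,
        where F' = "\<lambda>u. t * (a + (2 * ln u - 2 * ln (1 - u)))"
          and F'' = "\<lambda>u. t * (2 / u + 2 / (1 - u))"])
    fix u assume "u \<in> {c..d}"
    then have u: "0 < u" "u < 1" using assms by auto
    show "((\<lambda>u. t * (a * u + qs_g u)) has_real_derivative
        t * (a + (2 * ln u - 2 * ln (1 - u)))) (at u)"
      using qs_g_has_real_derivative[OF u] by (auto intro!: derivative_eq_intros)
    show "((\<lambda>u. t * (a + (2 * ln u - 2 * ln (1 - u)))) has_real_derivative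
        t * (2 / u + 2 / (1 - u))) (at u)"
      using u by (auto intro!: derivative_eq_intros simp: field_simps)
    have "u * (1 - u) \<le> 1 / 4"
      using zero_le_power2[of "u - 1/2"] by (simp add: power2_eq_square algebra_simps)
    then have "8 \<le> 2 / u + 2 / (1 - u)"
      using u by (simp add: field_simps)
    then show "8 * t \<le> t * (2 / u + 2 / (1 - u))"
      using \<open>t > 0\<close> by simp
  qed (use assms in \<open>auto intro!: continuous_intros\<close>)
  also have "4 / (4 * sqrt t) + 2 * (4 * sqrt t) / (8 * t) = 2 / sqrt t"
    using \<open>t > 0\<close> by (simp add: field_simps real_sqrt_mult[symmetric])
  finally show ?thesis .
qed

lemma norm_integral_iexp_qs_phase_unit:
  assumes "t > 0"
  shows "norm (integral {0..1} (\<lambda>u. iexp (t * (a * u + qs_g u)))) \<le> 2 / sqrt t"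
proof (rule field_le_epsilon)
  fix e :: real assume "0 < e"
  define f where "f u = iexp (t * (a * u + qs_g u))" for u
  define \<epsilon> where "\<epsilon> = min (e / 2) (1/4)"
  have \<epsilon>: "0 < \<epsilon>" "\<epsilon> < 1/2" "2 * \<epsilon> \<le> e" using \<open>0 < e\<close> by (auto simp: \<epsilon>_def)
  have f: "f integrable_on {0..1}"
    unfolding f_def by (rule uniform_measure_01_integral(2)[where B=1]) auto
  have "norm (integral {0..1} f)
      \<le> norm (integral {0..\<epsilon>} f) + norm (integral {\<epsilon>..1-\<epsilon>} f) + norm (integral {1-\<epsilon>..1} f)"
    using \<epsilon> by (intro norm_integral_split3_le f) auto
  also have "\<dots> \<le> (\<epsilon> - 0) + 2 / sqrt t + (1 - (1 - \<epsilon>))"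
  proof (intro add_mono)
    show "norm (integral {0..\<epsilon>} f) \<le> \<epsilon> - 0"
      by (rule norm_integral_le_length) (use \<epsilon> f in \<open>auto intro: integrable_on_subinterval simp: f_def\<close>)
    show "norm (integral {1-\<epsilon>..1} f) \<le> 1 - (1 - \<epsilon>)"
      by (rule norm_integral_le_length) (use \<epsilon> f in \<open>auto intro: integrable_on_subinterval simp: f_def\<close>)
    show "norm (integral {\<epsilon>..1-\<epsilon>} f) \<le> 2 / sqrt t"
      unfolding f_def by (rule norm_integral_iexp_qs_phase_interior) (use \<open>t > 0\<close> \<epsilon> in auto)
  qed
  finally show "norm (integral {0..1} f) \<le> 2 / sqrt t + e"
    using \<epsilon> by linarith
qed

lemma norm_integral_iexp_qs_phase:
  assumes "t \<noteq> 0"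
  shows "norm (integral {0..1} (\<lambda>u. iexp (t * (u * a + (1 - u) * b + qs_g u)))) \<le> 2 / sqrt \<bar>t\<bar>"
proof -
  have "iexp (t * (u * a + (1 - u) * b + qs_g u))
      = iexp (t * b) * iexp (t * ((a - b) * u + qs_g u))" for u
    by (simp add: algebra_simps flip: exp_add)
  then have "norm (integral {0..1} (\<lambda>u. iexp (t * (u * a + (1 - u) * b + qs_g u))))
      = norm (integral {0..1} (\<lambda>u. iexp (t * ((a - b) * u + qs_g u))))"
    by (simp add: norm_mult)
  also have "\<dots> \<le> 2 / sqrt \<bar>t\<bar>"
  proof (cases "t > 0")
    case True
    then show ?thesis using norm_integral_iexp_qs_phase_unit[OF True, of "a - b"] by simp
  next
    case False
    then have "t < 0" using \<open>t \<noteq> 0\<close> by simp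
    have "integral {0..1} (\<lambda>u. iexp (t * ((a - b) * u + qs_g u)))
        = cnj (integral {0..1} (\<lambda>u. iexp (- t * ((a - b) * u + qs_g u))))"
      by (simp add: integral_cnj exp_cnj)
    then show ?thesis
      using norm_integral_iexp_qs_phase_unit[of "- t" "a - b"] \<open>t < 0\<close> by simp
  qed
  finally show ?thesis .
qed

section \<open>The characteristic function of the limit law\<close>

locale quicksort_limit =
  fixes M :: "real measure"
  assumes limit_law: "quicksort_limit_law M"
begin

sublocale real_distribution M
  using limit_law by (simp add: quicksort_limit_law_def)

abbreviation U :: "real measure" where "U \<equiv> uniform_measure lborel {0<..<1}"

lemma prob_space_U: "prob_space U"
  by (rule prob_space_uniform_measure) auto

interpretation U: prob_space U by (rule prob_space_U)
interpretation MM: pair_prob_space M M ..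
interpretation UMM: pair_prob_space U "M \<Otimes>\<^sub>M M"
  by (simp add: pair_prob_space_def pair_sigma_finite_def prob_space_U MM.P.prob_space_axioms
      prob_space_imp_sigma_finite)

lemma char_eq_integral_product:
  "char M t = (\<integral>(u, y, z). iexp (t * (u * y + (1 - u) * z + qs_g u)) \<partial>(U \<Otimes>\<^sub>M (M \<Otimes>\<^sub>M M)))"
proof -
  have "M = distr (U \<Otimes>\<^sub>M (M \<Otimes>\<^sub>M M)) borel (\<lambda>(u, y, z). u * y + (1 - u) * z + qs_g u)"
    using limit_law by (simp add: quicksort_limit_law_def)
  then have "char M t
      = char (distr (U \<Otimes>\<^sub>M (M \<Otimes>\<^sub>M M)) borel (\<lambda>(u, y, z). u * y + (1 - u) * z + qs_g u)) t"
    by simp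
  also have "\<dots> = (\<integral>(u, y, z). iexp (t * (u * y + (1 - u) * z + qs_g u)) \<partial>(U \<Otimes>\<^sub>M (M \<Otimes>\<^sub>M M)))"
    unfolding char_def by (subst integral_distr) (auto simp: case_prod_beta')
  finally show ?thesis .
qed

lemma integral_iexp_pair: "(\<integral>(y, z). iexp (a * y) * iexp (b * z) \<partial>(M \<Otimes>\<^sub>M M)) = char M a * char M b"
proof -
  have "integrable (M \<Otimes>\<^sub>M M) (\<lambda>(y, z). iexp (a * y) * iexp (b * z))"
    by (rule MM.P.integrable_const_bound[where B=1]) (auto simp: norm_mult)
  then have "(\<integral>(y, z). iexp (a * y) * iexp (b * z) \<partial>(M \<Otimes>\<^sub>M M))
      = (\<integral>y. \<integral>z. iexp (a * y) * iexp (b * z) \<partial>M \<partial>M)"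
    using MM.integral_fst' by fastforce
  then show ?thesis
    unfolding char_def by simp
qed

lemma char_fixed_point:
  "char M t = (\<integral>u. iexp (t * qs_g u) * (char M (t * u) * char M (t * (1 - u))) \<partial>U)"
proof -
  have "integrable (U \<Otimes>\<^sub>M (M \<Otimes>\<^sub>M M)) (\<lambda>(u, y, z). iexp (t * (u * y + (1 - u) * z + qs_g u)))"
    by (rule UMM.P.integrable_const_bound[where B=1]) auto
  then have "char M t = (\<integral>u. \<integral>(y, z). iexp (t * (u * y + (1 - u) * z + qs_g u)) \<partial>(M \<Otimes>\<^sub>M M) \<partial>U)"
    unfolding char_eq_integral_product using UMM.integral_fst' by fastforce
  also have "\<dots> = (\<integral>u. iexp (t * qs_g u) *
      (\<integral>(y, z). iexp ((t * u) * y) * iexp ((t * (1 - u)) * z) \<partial>(M \<Otimes>\<^sub>M M)) \<partial>U)"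
  proof (rule Bochner_Integration.integral_cong[OF refl])
    fix u
    have "iexp (t * (u * y + (1 - u) * z + qs_g u))
        = iexp (t * qs_g u) * (iexp ((t * u) * y) * iexp ((t * (1 - u)) * z))" for y z
      by (simp add: algebra_simps flip: exp_add)
    then show "(\<integral>(y, z). iexp (t * (u * y + (1 - u) * z + qs_g u)) \<partial>(M \<Otimes>\<^sub>M M)) = iexp (t * qs_g u) *
        (\<integral>(y, z). iexp ((t * u) * y) * iexp ((t * (1 - u)) * z) \<partial>(M \<Otimes>\<^sub>M M))"
      by (simp add: case_prod_beta')
  qed
  finally show ?thesis
    by (simp only: integral_iexp_pair)
qed

lemma cmod_char_le_integral:
  "cmod (char M t) \<le> integral {0..1} (\<lambda>u. cmod (char M (t * u)) * cmod (char M (t * (1 - u))))"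
proof -
  have "cmod (char M t) \<le> (\<integral>u. cmod (iexp (t * qs_g u) * (char M (t * u) * char M (t * (1 - u)))) \<partial>U)"
    unfolding char_fixed_point[of t] by (rule integral_norm_bound)
  also have "\<dots> = (\<integral>u. cmod (char M (t * u)) * cmod (char M (t * (1 - u))) \<partial>U)"
    by (simp add: norm_mult)
  also have "\<dots> = integral {0..1} (\<lambda>u. cmod (char M (t * u)) * cmod (char M (t * (1 - u))))"
    by (rule uniform_measure_01_integral[where B=1])
      (auto simp: norm_mult intro!: mult_le_one cmod_char_le_1)
  finally show ?thesis .
qed

lemma cmod_char_le_oscillatory:
  assumes bound: "\<And>a b. norm (integral {0..1} (\<lambda>u. iexp (t * (u * a + (1 - u) * b + qs_g u)))) \<le> C"
  shows "cmod (char M t) \<le> C"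
proof -
  define f where
    "f yz = integral {0..1} (\<lambda>u. iexp (t * (u * fst yz + (1 - u) * snd yz + qs_g u)))" for yz
  have inner: "(\<integral>u. iexp (t * (u * fst yz + (1 - u) * snd yz + qs_g u)) \<partial>U) = f yz" for yz
    unfolding f_def by (rule uniform_measure_01_integral[where B=1]) auto
  have "integrable (U \<Otimes>\<^sub>M (M \<Otimes>\<^sub>M M)) (\<lambda>(u, yz). iexp (t * (u * fst yz + (1 - u) * snd yz + qs_g u)))"
    by (rule UMM.P.integrable_const_bound[where B=1]) auto
  from UMM.integrable_snd[OF this] UMM.integral_snd[OF this]
  have "integrable (M \<Otimes>\<^sub>M M) f" and "char M t = (\<integral>yz. f yz \<partial>(M \<Otimes>\<^sub>M M))"
    unfolding char_eq_integral_product inner by (simp_all add: case_prod_beta')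
  then have "cmod (char M t) \<le> (\<integral>yz. norm (f yz) \<partial>(M \<Otimes>\<^sub>M M))"
    by (simp add: integral_norm_bound)
  also have "\<dots> \<le> (\<integral>yz. C \<partial>(M \<Otimes>\<^sub>M M))"
    using integrable_norm[OF \<open>integrable (M \<Otimes>\<^sub>M M) f\<close>] bound
    by (intro integral_mono) (auto simp: f_def)
  also have "\<dots> = C" by (simp add: MM.P.prob_space)
  finally show ?thesis .
qed

end

section \<open>Beta integrals and numerical bounds\<close>

lemma integral_le_has_integral_open:
  fixes f g :: "real \<Rightarrow> real"
  assumes "f integrable_on {a..b}" "(g has_integral I) {a..b}" "\<And>u. u \<in> {a<..<b} \<Longrightarrow> f u \<le> g u"
  shows "integral {a..b} f \<le> I"
  using has_integral_le[of f "integral {a..b} f" "{a<..<b}" g I] assms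
  by (simp add: has_integral_Icc_iff_Ioo has_integral_integral)

lemma has_integral_beta_half:
  "((\<lambda>u. u powr (-1/2) * (1 - u) powr (-1/2)) has_integral pi / 2) {0..1/2}"
proof -
  have "((\<lambda>u. u powr (-1/2) * (1 - u) powr (-1/2)) has_integral
      arcsin (2 * (1/2) - 1) - arcsin (2 * 0 - 1)) {0..1/2}"
  proof (rule fundamental_theorem_of_calculus_interior)
    show "continuous_on {0..1/2} (\<lambda>u. arcsin (2 * u - 1))"
      by (intro continuous_intros continuous_on_arcsin') auto
    fix u :: real assume "u \<in> {0<..<1/2}"
    then have u: "0 < u" "u < 1" by auto
    have "1 - (2 * u - 1)^2 = 4 * (u * (1 - u))" by (simp add: power2_eq_square algebra_simps)
    then have "sqrt (1 - (2 * u - 1)^2) = 2 * (sqrt u * sqrt (1 - u))" by (simp add: real_sqrt_mult)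
    moreover have "((\<lambda>u. arcsin (2 * u - 1)) has_real_derivative
        inverse (sqrt (1 - (2 * u - 1)^2)) * 2) (at u)"
      using u by (auto intro!: derivative_eq_intros)
    ultimately show "((\<lambda>u. arcsin (2 * u - 1)) has_vector_derivative
        u powr (-1/2) * (1 - u) powr (-1/2)) (at u)"
      using u
      by (simp add: has_real_derivative_iff_has_vector_derivative powr_minus powr_half_sqrt field_simps)
  qed simp
  then show ?thesis by simp
qed

text \<open>The Taylor polynomial of \<open>(1 - u) powr (-3/4)\<close> of degree 3, with the quartic coefficient
  raised from \<open>1155/2048\<close> to \<open>1155/832\<close> so that it dominates the whole tail on \<open>[0, 1/2]\<close>.\<close>
definition pow34_majorant :: "real \<Rightarrow> real" where
  "pow34_majorant u = 1 + 3/4 * u + 21/32 * u^2 + 77/128 * u^3 + 1155/832 * u^4"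

lemma pow34_majorant_pos: "0 \<le> u \<Longrightarrow> 0 < pow34_majorant u"
  unfolding pow34_majorant_def by (simp add: add_pos_nonneg)

lemma one_le_pow34_majorant_power:
  assumes "0 \<le> u" "u \<le> 1/2"
  shows "1 \<le> pow34_majorant u ^ 4 * (1 - u) ^ 3"
proof -
  define P' where "P' u = 3/4 + 21/16 * u + 231/128 * u^2 + 1155/208 * u^3" for u :: real
  define q where "q u = pow34_majorant u ^ 4 * (1 - u) ^ 3" for u
  have q_deriv: "(q has_real_derivative
      pow34_majorant x ^ 3 * (1 - x)^2 * (21945/1664 * x^3 * (1 - 2 * x))) (at x)" for x
  proof -
    have "(pow34_majorant has_real_derivative P' x) (at x)"
      unfolding pow34_majorant_def[abs_def] P'_def
      by (rule derivative_eq_intros refl)+ (simp add: field_simps)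
    then have deriv: "(q has_real_derivative pow34_majorant x ^ 4 * (3 * (1 - x)^2 * (0 - 1))
        + (4 * pow34_majorant x ^ 3 * P' x) * (1 - x)^3) (at x)"
      unfolding q_def[abs_def] by (auto intro!: derivative_eq_intros)
    have factor: "pow34_majorant x ^ 4 * (3 * (1 - x)^2 * (0 - 1))
        + (4 * pow34_majorant x ^ 3 * P' x) * (1 - x)^3
        = pow34_majorant x ^ 3 * (1 - x)^2 * (4 * P' x * (1 - x) - 3 * pow34_majorant x)"
      by algebra
    have key: "4 * P' x * (1 - x) - 3 * pow34_majorant x = 21945/1664 * x^3 * (1 - 2 * x)"
      unfolding pow34_majorant_def P'_def by algebra
    show ?thesis
      using deriv unfolding factor key .
  qed
  have "q 0 \<le> q u"
  proof (rule DERIV_nonneg_imp_increasing_open[OF \<open>0 \<le> u\<close>])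
    fix x assume "0 < x" "x < u"
    then show "\<exists>y. (q has_real_derivative y) (at x) \<and> 0 \<le> y"
      using q_deriv assms pow34_majorant_pos[of x]
      by (intro exI conjI) (auto intro!: mult_nonneg_nonneg)
  qed (auto simp: q_def pow34_majorant_def intro!: continuous_intros)
  then show ?thesis by (simp add: q_def pow34_majorant_def)
qed

lemma powr_three_quarters_le_pow34_majorant:
  assumes "0 \<le> u" "u \<le> 1/2"
  shows "(1 - u) powr (-3/4) \<le> pow34_majorant u"
proof -
  have "0 < 1 - u" using assms by simp
  then have "((1 - u) powr (-3/4)) ^ 4 = (1 - u) powr (real 4 * (-3/4))"
    by (intro powr_power) simp
  also have "\<dots> = inverse ((1 - u) powr 3)"
    by (simp add: powr_minus[symmetric])
  also have "\<dots> = 1 / (1 - u) ^ 3"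
    using \<open>0 < 1 - u\<close> by (simp add: powr_realpow inverse_eq_divide)
  also have "\<dots> \<le> pow34_majorant u ^ 4"
    using one_le_pow34_majorant_power[OF assms] \<open>0 < 1 - u\<close> by (simp add: pos_divide_le_eq)
  finally show ?thesis
    using power_mono_iff[of "(1 - u) powr (-3/4)" "pow34_majorant u" 4] pow34_majorant_pos[OF assms(1)]
    by simp
qed

lemma has_integral_pow34_majorant:
  "((\<lambda>u. u powr (-3/4) * pow34_majorant u) has_integral (1/2) powr (1/4) * (468499/106080)) {0..1/2}"
proof -
  define Q where "Q u = 4 + 3/5 * u + 7/24 * u^2 + 77/416 * u^3 + 1155/3536 * u^4" for u :: real
  define Q' where "Q' u = 3/5 + 7/12 * u + 231/416 * u^2 + 1155/884 * u^3" for u :: real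
  have Q_deriv: "(Q has_real_derivative Q' u) (at u)" for u
    unfolding Q_def[abs_def] Q'_def by (rule derivative_eq_intros refl)+ (simp add: field_simps)
  have "((\<lambda>u. u powr (-3/4) * pow34_majorant u) has_integral
      (1/2) powr (1/4) * Q (1/2) - 0 powr (1/4) * Q 0) {0..1/2}"
  proof (rule fundamental_theorem_of_calculus_interior)
    show "continuous_on {0..1/2} (\<lambda>u. u powr (1/4) * Q u)"
      unfolding Q_def by (intro continuous_intros continuous_on_powr') auto
    fix u :: real assume "u \<in> {0<..<1/2}"
    then have "0 < u" by simp
    have "u powr (1/4) = u powr (-3/4) * u"
      using powr_add[of u "-3/4" 1] \<open>0 < u\<close> by simp
    then have "(1/4) * u powr (1/4 - 1) * Q u + u powr (1/4) * Q' u
        = u powr (-3/4) * (Q u / 4 + u * Q' u)"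
      by (simp add: algebra_simps)
    also have "Q u / 4 + u * Q' u = pow34_majorant u"
      unfolding Q_def Q'_def pow34_majorant_def by algebra
    finally have "(1/4) * u powr (1/4 - 1) * Q u + u powr (1/4) * Q' u
        = u powr (-3/4) * pow34_majorant u" .
    moreover have "((\<lambda>u. u powr (1/4) * Q u) has_real_derivative
        (1/4) * u powr (1/4 - 1) * Q u + u powr (1/4) * Q' u) (at u)"
      using \<open>0 < u\<close> by (auto intro!: derivative_eq_intros Q_deriv)
    ultimately show "((\<lambda>u. u powr (1/4) * Q u) has_vector_derivative
        u powr (-3/4) * pow34_majorant u) (at u)"
      by (simp add: has_real_derivative_iff_has_vector_derivative)
  qed simp
  then show ?thesis by (simp add: Q_def power_divide)
qed

lemma pow34_integral_bound: "(1/2::real) powr (1/4) * (468499/106080) \<le> 3.71426"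
proof -
  have "(1/2::real) powr (1/4) \<le> ((841/1000) powr 4) powr (1/4)"
    by (rule powr_mono2) (auto simp: powr_numeral power_divide)
  also have "\<dots> = 841/1000"
    by (simp only: powr_powr) simp
  finally show ?thesis by simp
qed

lemma two_powr_add_half_le: "(2::real) powr (real n + 1/2) \<le> 3/2 * 2 ^ n"
proof -
  have "sqrt 2 \<le> sqrt ((3/2::real)\<^sup>2)" by (rule real_sqrt_le_mono) (simp add: power2_eq_square)
  then show ?thesis by (simp add: powr_add powr_realpow powr_half_sqrt)
qed

section \<open>Decay of a modulus obeying the smoothing inequality\<close>

locale qs_modulus =
  fixes \<psi> :: "real \<Rightarrow> real"
  assumes continuous: "continuous_on UNIV \<psi>"
    and nonneg: "0 \<le> \<psi> t"
    and le_one: "\<psi> t \<le> 1"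
    and at_zero: "\<psi> 0 = 1"
    and even: "\<psi> (- t) = \<psi> t"
    and le_integral: "\<psi> t \<le> integral {0..1} (\<lambda>u. \<psi> (t * u) * \<psi> (t * (1 - u)))"
    and le_inverse_sqrt: "t \<noteq> 0 \<Longrightarrow> \<psi> t \<le> 2 / sqrt \<bar>t\<bar>"
begin

definition decay_bound :: "real \<Rightarrow> real \<Rightarrow> bool" where
  "decay_bound p C \<longleftrightarrow> (\<forall>t. abs_pow t p * \<psi> t \<le> C)"

definition decay_const :: "real \<Rightarrow> real" where
  "decay_const p = (SUP t. abs_pow t p * \<psi> t)"

lemma decay_boundI:
  assumes "p > 0" "0 \<le> C" "\<And>t. t \<noteq> 0 \<Longrightarrow> \<bar>t\<bar> powr p * \<psi> t \<le> C"
  shows "decay_bound p C"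
  unfolding decay_bound_def
proof
  fix t
  show "abs_pow t p * \<psi> t \<le> C"
    using assms by (cases "t = 0") (auto simp: abs_pow_def)
qed

lemma decay_bound_at:
  assumes "decay_bound p C" "p > 0"
  shows "\<bar>t\<bar> powr p * \<psi> t \<le> C"
  using assms unfolding decay_bound_def abs_pow_def by (auto dest: spec[of _ t])

lemma decay_boundD:
  assumes "decay_bound p C" "p > 0" "t \<noteq> 0"
  shows "\<psi> t \<le> C * \<bar>t\<bar> powr (- p)"
  using decay_bound_at[OF assms(1,2), of t] assms(3) by (simp add: powr_minus field_simps)

lemma decay_bound_nonneg:
  assumes "decay_bound p C"
  shows "0 \<le> C"
proof -
  have "0 \<le> abs_pow 0 p * \<psi> 0" by (simp add: abs_pow_def nonneg)
  also have "\<dots> \<le> C" using assms unfolding decay_bound_def by blast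
  finally show ?thesis .
qed

lemma decay_bound_mono: "decay_bound p C \<Longrightarrow> C \<le> C' \<Longrightarrow> decay_bound p C'"
  unfolding decay_bound_def by (meson order_trans)

lemma bdd_above_of_decay_bound: "decay_bound p C \<Longrightarrow> bdd_above (range (\<lambda>t. abs_pow t p * \<psi> t))"
  unfolding decay_bound_def by (intro bdd_aboveI2) auto

lemma decay_const_le: "decay_bound p C \<Longrightarrow> decay_const p \<le> C"
  unfolding decay_bound_def decay_const_def by (intro cSUP_least) auto

lemma decay_bound_decay_const:
  "bdd_above (range (\<lambda>t. abs_pow t p * \<psi> t)) \<Longrightarrow> decay_bound p (decay_const p)"
  unfolding decay_bound_def decay_const_def by (auto intro: cSUP_upper)

lemma decay_bound_zero: "decay_bound 0 1"
  unfolding decay_bound_def abs_pow_def by (simp add: le_one)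

lemma decay_bound_half: "decay_bound (1/2) 2"
proof (rule decay_boundI)
  fix t :: real assume "t \<noteq> 0"
  then show "\<bar>t\<bar> powr (1/2) * \<psi> t \<le> 2"
    using mult_left_mono[OF le_inverse_sqrt[OF \<open>t \<noteq> 0\<close>], of "sqrt \<bar>t\<bar>"] by (simp add: powr_half_sqrt)
qed auto

lemma decay_bound_midpoint:
  assumes "decay_bound p C" "decay_bound q D" "0 < p" "0 < q"
  shows "decay_bound ((p + q) / 2) (sqrt (C * D))"
proof (rule decay_boundI)
  fix t :: real assume "t \<noteq> 0"
  have "(\<bar>t\<bar> powr ((p + q) / 2) * \<psi> t)^2 = (\<bar>t\<bar> powr p * \<psi> t) * (\<bar>t\<bar> powr q * \<psi> t)"
    by (simp add: power2_eq_square powr_add[symmetric] algebra_simps)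
  also have "\<dots> \<le> C * D"
    using assms decay_bound_nonneg[OF assms(1)]
    by (intro mult_mono decay_bound_at) (auto simp: nonneg)
  finally show "\<bar>t\<bar> powr ((p + q) / 2) * \<psi> t \<le> sqrt (C * D)"
    by (simp add: real_le_rsqrt nonneg)
qed (use assms decay_bound_nonneg in auto)

lemma decay_bound_interpolate:
  assumes "decay_bound q C" "0 < p" "p \<le> q"
  shows "decay_bound p (C powr (p / q))"
proof (rule decay_boundI)
  fix t :: real assume "t \<noteq> 0"
  have "0 \<le> \<bar>t\<bar> powr q * \<psi> t" "\<bar>t\<bar> powr q * \<psi> t \<le> C"
    using assms decay_bound_at[OF assms(1)] by (auto simp: nonneg)
  then have "(\<bar>t\<bar> powr q * \<psi> t) powr (p / q) \<le> C powr (p / q)"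
    using assms by (intro powr_mono2) auto
  moreover have "\<psi> t powr (1 - p / q) \<le> 1"
    using assms le_one[of t] nonneg[of t] by (intro powr_le1) (auto simp: field_simps)
  moreover have "\<bar>t\<bar> powr p * \<psi> t = (\<bar>t\<bar> powr q * \<psi> t) powr (p / q) * \<psi> t powr (1 - p / q)"
  proof (cases "\<psi> t = 0")
    case False
    then show ?thesis using assms nonneg[of t]
      by (simp add: powr_mult powr_powr mult.assoc flip: powr_add)
  qed simp
  ultimately show "\<bar>t\<bar> powr p * \<psi> t \<le> C powr (p / q)"
    using mult_mono[of _ "C powr (p / q)" _ 1] by fastforce
qed (use assms in auto)

lemma integrable_on_product: "(\<lambda>u. \<psi> (t * u) * \<psi> (t * (1 - u))) integrable_on {a..b}"
  by (intro integrable_continuous_interval continuous_intros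
      continuous_on_compose2[OF continuous, of "{a..b}"]) auto

lemma le_twice_integral_half: "\<psi> t \<le> 2 * integral {0..1/2} (\<lambda>u. \<psi> (t * u) * \<psi> (t * (1 - u)))"
proof -
  let ?f = "\<lambda>u. \<psi> (t * u) * \<psi> (t * (1 - u))"
  have "integral {1/2..1} ?f = integral {- (- 1/2)..- (- 1)} (\<lambda>v. ?f (1 + - v))"
    by (simp add: mult.commute)
  also have "\<dots> = integral {- 1..- 1/2} (?f \<circ> (+) 1)"
    by (subst Henstock_Kurzweil_Integration.integral_reflect_real) (simp add: o_def)
  also have "\<dots> = integral {0..1/2} ?f"
    by (subst integral_shift_Icc_real) simp
  finally have "integral {1/2..1} ?f = integral {0..1/2} ?f" .
  moreover have "integral {0..1/2} ?f + integral {1/2..1} ?f = integral {0..1} ?f"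
    by (rule Henstock_Kurzweil_Integration.integral_combine[OF _ _ integrable_on_product]) auto
  ultimately show ?thesis
    using le_integral[of t] by simp
qed

lemma product_le_of_decay_bound:
  assumes "decay_bound p C" "0 < p" "t \<noteq> 0" "0 < u" "u < 1"
  shows "\<psi> (t * u) * \<psi> (t * (1 - u)) \<le> C\<^sup>2 * \<bar>t\<bar> powr (- 2 * p) * (u powr (- p) * (1 - u) powr (- p))"
proof -
  have split: "\<bar>t * u\<bar> powr (- p) = \<bar>t\<bar> powr (- p) * u powr (- p)"
    "\<bar>t * (1 - u)\<bar> powr (- p) = \<bar>t\<bar> powr (- p) * (1 - u) powr (- p)"
    using assms by (simp_all add: abs_mult powr_mult)
  have "\<psi> (t * u) * \<psi> (t * (1 - u)) \<le> (C * \<bar>t * u\<bar> powr (- p)) * (C * \<bar>t * (1 - u)\<bar> powr (- p))"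
    using assms decay_bound_nonneg[OF assms(1)]
    by (intro mult_mono decay_boundD[OF assms(1,2)]) (auto simp: nonneg)
  also have "\<dots> = C\<^sup>2 * (\<bar>t\<bar> powr (- p) * \<bar>t\<bar> powr (- p)) * (u powr (- p) * (1 - u) powr (- p))"
    unfolding split by (simp add: power2_eq_square algebra_simps)
  also have "\<bar>t\<bar> powr (- p) * \<bar>t\<bar> powr (- p) = \<bar>t\<bar> powr (- 2 * p)"
    by (simp add: powr_add[symmetric])
  finally show ?thesis .
qed

lemma decay_bound_square:
  assumes "decay_bound p C" "0 < p"
    and h: "(h has_integral I) {0..1/2}"
    and majorant: "\<And>u. u \<in> {0<..<1/2} \<Longrightarrow> u powr (- p) * (1 - u) powr (- p) \<le> h u"
  shows "decay_bound (2 * p) (2 * C\<^sup>2 * I)"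
proof (rule decay_boundI)
  fix t :: real assume "t \<noteq> 0"
  define c where "c = C\<^sup>2 * \<bar>t\<bar> powr (- 2 * p)"
  have "\<psi> (t * u) * \<psi> (t * (1 - u)) \<le> c * h u" if "u \<in> {0<..<1/2}" for u
  proof -
    have "\<psi> (t * u) * \<psi> (t * (1 - u)) \<le> c * (u powr (- p) * (1 - u) powr (- p))"
      unfolding c_def using product_le_of_decay_bound[OF assms(1,2) \<open>t \<noteq> 0\<close>, of u] that by simp
    also have "\<dots> \<le> c * h u"
      using majorant[OF that] by (simp add: c_def mult_left_mono)
    finally show ?thesis .
  qed
  then have "integral {0..1/2} (\<lambda>u. \<psi> (t * u) * \<psi> (t * (1 - u))) \<le> c * I"
    by (intro integral_le_has_integral_open[OF integrable_on_product has_integral_mult_right[OF h]])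
  then have "\<psi> t \<le> 2 * (c * I)"
    using le_twice_integral_half[of t] by linarith
  then have "\<bar>t\<bar> powr (2 * p) * \<psi> t \<le> \<bar>t\<bar> powr (2 * p) * (2 * (c * I))"
    by (simp add: mult_left_mono)
  also have "\<dots> = 2 * C\<^sup>2 * I"
    using \<open>t \<noteq> 0\<close> by (simp add: c_def powr_add[symmetric])
  finally show "\<bar>t\<bar> powr (2 * p) * \<psi> t \<le> 2 * C\<^sup>2 * I" .
next
  have "integral {0..1/2::real} (\<lambda>_. 0 :: real) \<le> I"
    using majorant
    by (intro integral_le_has_integral_open[OF _ h]) (auto intro: order_trans[OF _ majorant])
  then show "0 \<le> 2 * C\<^sup>2 * I" by simp
qed (use assms in simp)

lemma decay_bound_one: "decay_bound 1 (4 * pi)"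
  using decay_bound_square[OF decay_bound_half _ has_integral_beta_half] by simp

lemma decay_bound_three_quarters: "decay_bound (3/4) (sqrt (8 * pi))"
  using decay_bound_midpoint[OF decay_bound_half decay_bound_one] by simp

lemma decay_bound_three_halves: "decay_bound (3/2) 186.7"
proof -
  have "decay_bound (2 * (3/4)) (2 * (sqrt (8 * pi))\<^sup>2 * ((1/2) powr (1/4) * (468499/106080)))"
  proof (rule decay_bound_square[OF decay_bound_three_quarters _ has_integral_pow34_majorant])
    fix u :: real assume "u \<in> {0<..<1/2}"
    then show "u powr (- (3/4)) * (1 - u) powr (- (3/4)) \<le> u powr (-3/4) * pow34_majorant u"
      using powr_three_quarters_le_pow34_majorant[of u] by (auto intro!: mult_left_mono)
  qed simp
  moreover have "2 * (sqrt (8 * pi))\<^sup>2 * ((1/2) powr (1/4) * (468499/106080))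
      = 16 * (pi * ((1/2) powr (1/4) * (468499/106080)))"
    by simp
  moreover have "\<dots> \<le> 16 * (3.1415926535899 * 3.71426)"
    using pow34_integral_bound pi_approx by (intro mult_left_mono mult_mono) auto
  ultimately show ?thesis
    by (auto elim: decay_bound_mono)
qed

lemma integrable_on_interval: "\<psi> integrable_on {a..b}"
  by (rule integrable_continuous_interval[OF continuous_on_subset[OF continuous]]) simp

lemma integral_le_length: "a \<le> b \<Longrightarrow> integral {a..b} \<psi> \<le> b - a"
  using integral_le[OF integrable_on_interval integrable_const_ivl[of 1 a b]] le_one by simp

lemma integral_split: "a \<le> b \<Longrightarrow> b \<le> c \<Longrightarrow> integral {a..c} \<psi> = integral {a..b} \<psi> + integral {b..c} \<psi>"
  using Henstock_Kurzweil_Integration.integral_combine[OF _ _ integrable_on_interval] by simp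

lemma integral_mono_upper: "0 \<le> T \<Longrightarrow> T \<le> T' \<Longrightarrow> integral {0..T} \<psi> \<le> integral {0..T'} \<psi>"
  using integral_split[of 0 T T'] integral_nonneg[OF integrable_on_interval, of T T'] nonneg by simp

lemma integral_le_of_decay_bound:
  assumes "decay_bound p C" "0 < p" "p \<noteq> 1" "0 < a" "a \<le> b"
  shows "integral {a..b} \<psi> \<le> C * (b powr (1 - p) - a powr (1 - p)) / (1 - p)"
proof (rule integral_le_has_integral_open[OF integrable_on_interval])
  have "((\<lambda>s. s powr (1 - p) / (1 - p)) has_real_derivative s powr (- p)) (at s)" if "0 < s" for s
    using that \<open>p \<noteq> 1\<close> by (auto intro!: derivative_eq_intros)
  then have "((\<lambda>s. s powr (- p)) has_integral
      b powr (1 - p) / (1 - p) - a powr (1 - p) / (1 - p)) {a..b}"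
    using assms by (intro fundamental_theorem_of_calculus)
      (auto simp: has_real_derivative_iff_has_vector_derivative[symmetric]
        intro: has_field_derivative_at_within)
  from has_integral_mult_right[OF this, of C]
  show "((\<lambda>s. C * s powr (- p)) has_integral C * (b powr (1 - p) - a powr (1 - p)) / (1 - p)) {a..b}"
    by (simp only: diff_divide_distrib[symmetric] times_divide_eq_right)
  fix s assume "s \<in> {a<..<b}"
  then show "\<psi> s \<le> C * s powr (- p)"
    using decay_boundD[OF assms(1,2), of s] assms by simp
qed

lemma integral_tail_le:
  assumes "decay_bound p C" "1 < p" "0 < a" "a \<le> b"
  shows "integral {a..b} \<psi> \<le> C * a powr (1 - p) / (p - 1)"
proof -
  have "C * (b powr (1 - p) - a powr (1 - p)) / (1 - p)
      = C * (a powr (1 - p) - b powr (1 - p)) / (p - 1)"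
    using \<open>1 < p\<close> by (simp add: field_simps)
  then have "integral {a..b} \<psi> \<le> C * (a powr (1 - p) - b powr (1 - p)) / (p - 1)"
    using integral_le_of_decay_bound[of p C a b] assms by simp
  also have "\<dots> \<le> C * a powr (1 - p) / (p - 1)"
    using assms decay_bound_nonneg[OF assms(1)] by (intro divide_right_mono mult_left_mono) auto
  finally show ?thesis .
qed

lemma integral_le_of_decay_bound_gt_one:
  assumes "decay_bound p C" "1 < p" "0 < C" "0 \<le> T"
  shows "integral {0..T} \<psi> \<le> C powr (1/p) * p / (p - 1)"
proof -
  define s where "s = C powr (1/p)"
  have "0 < s" using \<open>0 < C\<close> by (simp add: s_def)
  have "C * s powr (1 - p) = C powr 1 * C powr ((1 - p) / p)"
    using assms by (simp add: s_def powr_powr)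
  also have "\<dots> = C powr (1 + (1 - p) / p)"
    by (rule powr_add[symmetric])
  also have "1 + (1 - p) / p = 1 / p"
    using assms by (simp add: field_simps)
  finally have "C * s powr (1 - p) = s"
    unfolding s_def .
  have "integral {0..T} \<psi> \<le> integral {0..max T s} \<psi>"
    using assms by (intro integral_mono_upper) auto
  also have "\<dots> = integral {0..s} \<psi> + integral {s..max T s} \<psi>"
    using \<open>0 < s\<close> by (intro integral_split) auto
  also have "\<dots> \<le> (s - 0) + C * s powr (1 - p) / (p - 1)"
    using \<open>0 < s\<close> assms by (intro add_mono integral_le_length integral_tail_le) auto
  also have "\<dots> = s * p / (p - 1)"
    using \<open>C * s powr (1 - p) = s\<close> assms by (simp add: field_simps)
  finally show ?thesis by (simp add: s_def)
qed

lemma integral_le_74: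
  assumes "0 \<le> T"
  shows "integral {0..T} \<psi> \<le> 74"
proof -
  have sqrt_values: "sqrt 100 = (10::real)" "sqrt 4 = (2::real)"
    by (simp_all add: real_sqrt_eq_iff[symmetric] flip: real_sqrt_abs[of 10] real_sqrt_abs[of 2])
  have "integral {0..T} \<psi> \<le> integral {0..max T 100} \<psi>"
    using assms by (intro integral_mono_upper) auto
  also have "\<dots> = integral {0..4} \<psi> + integral {4..100} \<psi> + integral {100..max T 100} \<psi>"
    using integral_split[of 0 4 "max T 100"] integral_split[of 4 100 "max T 100"] by simp
  also have "\<dots> \<le> (4 - 0) + 2 * (100 powr (1 - 1/2) - 4 powr (1 - 1/2)) / (1 - 1/2)
      + 186.7 * 100 powr (1 - 3/2) / (3/2 - 1)"
    by (intro add_mono integral_le_length integral_le_of_decay_bound[OF decay_bound_half]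
        integral_tail_le[OF decay_bound_three_halves]) auto
  also have "\<dots> \<le> 74"
    using sqrt_values by (simp add: powr_half_sqrt powr_minus)
  finally show ?thesis .
qed

lemma integral_half_scaled:
  assumes "t \<noteq> 0"
  shows "integral {0..1/2} (\<lambda>u. \<psi> (t * u)) = integral {0..\<bar>t\<bar>/2} \<psi> / \<bar>t\<bar>"
proof -
  have "integral {0..1/2} (\<lambda>u. \<psi> (t * u)) = integral {0..1/2} (\<lambda>u. \<psi> (\<bar>t\<bar> * u))"
  proof (rule integral_cong)
    fix u :: real assume "u \<in> {0..1/2}"
    then have "\<bar>t * u\<bar> = \<bar>t\<bar> * u" by (simp add: abs_mult)
    moreover have "\<psi> \<bar>s\<bar> = \<psi> s" for s
      using even[of s] by (cases "0 \<le> s") simp_all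
    ultimately show "\<psi> (t * u) = \<psi> (\<bar>t\<bar> * u)" by metis
  qed
  also have "\<dots> = integral {0..\<bar>t\<bar>/2} \<psi> / \<bar>t\<bar>"
    using integral_stretch_real[where m="\<bar>t\<bar>" and f=\<psi> and a=0 and b="\<bar>t\<bar>/2"] assms by simp
  finally show ?thesis .
qed

lemma decay_bound_add_one:
  assumes "decay_bound q C" "0 < q" and K: "\<And>T. 0 \<le> T \<Longrightarrow> integral {0..T} \<psi> \<le> K"
  shows "decay_bound (q + 1) (2 powr (q + 1) * C * K)"
proof (rule decay_boundI)
  have "0 \<le> C" by (rule decay_bound_nonneg[OF assms(1)])
  moreover have "0 \<le> K" using K[of 0] by simp
  ultimately show "0 \<le> 2 powr (q + 1) * C * K" by simp
  fix t :: real assume "t \<noteq> 0"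
  define B where "B = C * (\<bar>t\<bar> / 2) powr (- q)"
  have pointwise: "\<psi> (t * u) * \<psi> (t * (1 - u)) \<le> B * \<psi> (t * u)" if "u \<in> {0<..<1/2}" for u
  proof -
    have "\<psi> (t * (1 - u)) \<le> C * \<bar>t * (1 - u)\<bar> powr (- q)"
      using that \<open>t \<noteq> 0\<close> by (intro decay_boundD[OF assms(1,2)]) auto
    also have "\<dots> \<le> B"
      unfolding B_def using that \<open>t \<noteq> 0\<close> \<open>0 \<le> C\<close> \<open>0 < q\<close>
      by (intro mult_left_mono powr_mono2') (auto simp: abs_mult)
    finally have "\<psi> (t * (1 - u)) \<le> B" .
    from mult_left_mono[OF this nonneg[of "t * u"]] show ?thesis
      by (simp add: mult.commute)
  qed
  have "(\<lambda>u. \<psi> (t * u)) integrable_on {0..1/2}"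
    by (intro integrable_continuous_interval continuous_on_compose2[OF continuous] continuous_intros)
      auto
  then have "integral {0..1/2} (\<lambda>u. \<psi> (t * u) * \<psi> (t * (1 - u)))
      \<le> B * integral {0..1/2} (\<lambda>u. \<psi> (t * u))"
    using pointwise by (intro integral_le_has_integral_open[OF integrable_on_product
        has_integral_mult_right[OF integrable_integral]])
  also have "\<dots> \<le> B * (K / \<bar>t\<bar>)"
    unfolding integral_half_scaled[OF \<open>t \<noteq> 0\<close>] using K[of "\<bar>t\<bar> / 2"] \<open>0 \<le> C\<close>
    by (intro mult_left_mono divide_right_mono) (auto simp: B_def)
  finally have "\<psi> t \<le> 2 * B * K / \<bar>t\<bar>"
    using le_twice_integral_half[of t] by simp
  then have "\<bar>t\<bar> powr (q + 1) * \<psi> t \<le> \<bar>t\<bar> powr (q + 1) * (2 * B * K / \<bar>t\<bar>)"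
    by (rule mult_left_mono) simp
  also have "\<dots> = 2 powr (q + 1) * C * K"
    using \<open>t \<noteq> 0\<close>
    by (simp add: B_def powr_add powr_divide powr_minus field_simps)
  finally show "\<bar>t\<bar> powr (q + 1) * \<psi> t \<le> 2 powr (q + 1) * C * K" .
qed (use assms in simp)

lemma decay_bound_five_halves: "decay_bound (5/2) 82895"
proof -
  have "decay_bound (3/2 + 1) (2 powr (3/2 + 1) * 186.7 * 74)"
    by (rule decay_bound_add_one[OF decay_bound_three_halves _ integral_le_74]) auto
  moreover have "2 powr (3/2 + 1) * 186.7 * 74 \<le> (3/2 * 2^2) * 186.7 * (74::real)"
    using two_powr_add_half_le[of 2] by (intro mult_right_mono) auto
  ultimately show ?thesis by (auto elim: decay_bound_mono)
qed

lemma decay_bound_seven_halves: "decay_bound (7/2) 73610760"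
proof -
  have "decay_bound (5/2 + 1) (2 powr (5/2 + 1) * 82895 * 74)"
    by (rule decay_bound_add_one[OF decay_bound_five_halves _ integral_le_74]) auto
  moreover have "2 powr (5/2 + 1) * 82895 * 74 \<le> (3/2 * 2^3) * 82895 * (74::real)"
    using two_powr_add_half_le[of 3] by (intro mult_right_mono) auto
  ultimately show ?thesis by (auto elim: decay_bound_mono)
qed

lemma decay_bound_two: "decay_bound 2 8192"
proof -
  have "decay_bound (1 + 1) (2 powr (1 + 1) * (4 * pi) * 74)"
    by (rule decay_bound_add_one[OF decay_bound_one _ integral_le_74]) auto
  moreover have "2 powr (1 + 1) * (4 * pi) * 74 \<le> (8192::real)"
    using pi_less_4 by simp
  ultimately show ?thesis by (auto elim: decay_bound_mono)
qed

lemma decay_bound_two_powr_upto: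
  assumes "1/2 < p" "p \<le> real n + 2"
  shows "decay_bound p (2 powr (p\<^sup>2 + 6 * p))"
  using assms
proof (induction n arbitrary: p)
  case 0
  have "(8192::real) powr (p / 2) = (2 powr 13) powr (p / 2)"
    by (simp add: powr_numeral)
  also have "\<dots> = 2 powr (13 * p / 2)"
    by (simp only: powr_powr) simp
  finally have "decay_bound p (2 powr (13 * p / 2))"
    using 0 decay_bound_interpolate[OF decay_bound_two, of p] by simp
  moreover have "13 * p / 2 \<le> p\<^sup>2 + 6 * p"
    using 0 by (simp add: power2_eq_square field_simps)
  ultimately show ?case by (auto elim: decay_bound_mono)
next
  case (Suc n)
  show ?case
  proof (cases "p \<le> real n + 2")
    case False
    then have "decay_bound (p - 1) (2 powr ((p - 1)\<^sup>2 + 6 * (p - 1)))"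
      using Suc by (intro Suc.IH) auto
    then have bound: "decay_bound p (2 powr p * 2 powr ((p - 1)\<^sup>2 + 6 * (p - 1)) * 74)"
      using False decay_bound_add_one[OF _ _ integral_le_74, of "p - 1"] by simp
    have "2 powr p * 2 powr ((p - 1)\<^sup>2 + 6 * (p - 1)) * 74
        \<le> 2 powr p * 2 powr ((p - 1)\<^sup>2 + 6 * (p - 1)) * (2::real) powr 7"
      by (simp add: powr_numeral)
    also have "\<dots> = 2 powr (p + ((p - 1)\<^sup>2 + 6 * (p - 1)) + 7)"
      by (simp only: powr_add)
    also have "\<dots> \<le> 2 powr (p\<^sup>2 + 6 * p)"
      using False by (simp add: power2_eq_square algebra_simps)
    finally show ?thesis
      by (rule decay_bound_mono[OF bound])
  qed (use Suc in auto)
qed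

lemma decay_bound_two_powr:
  assumes "0 < p"
  shows "decay_bound p (2 powr (p\<^sup>2 + 6 * p))"
proof (cases "p \<le> 1/2")
  case True
  then have "decay_bound p (2 powr (p / (1/2)))"
    using assms by (intro decay_bound_interpolate[OF decay_bound_half]) auto
  moreover have "(2::real) powr (p / (1/2)) \<le> 2 powr (p\<^sup>2 + 6 * p)"
    using assms by (simp add: power2_eq_square)
  ultimately show ?thesis by (auto elim: decay_bound_mono)
next
  case False
  moreover have "p \<le> real (nat \<lceil>p\<rceil>) + 2" by linarith
  ultimately show ?thesis using decay_bound_two_powr_upto[of p "nat \<lceil>p\<rceil>"] by simp
qed

lemma bdd_above_decay: "0 \<le> p \<Longrightarrow> bdd_above (range (\<lambda>t. abs_pow t p * \<psi> t))"
  using bdd_above_of_decay_bound[OF decay_bound_zero]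
    bdd_above_of_decay_bound[OF decay_bound_two_powr, of p]
  by (cases "p = 0") auto

lemma obtain_nonzero_pos:
  obtains t where "t \<noteq> 0" "0 < \<psi> t"
proof -
  have "(\<psi> \<longlongrightarrow> 1) (at 0)"
    using continuous at_zero by (metis continuous_on_def UNIV_I)
  then have "\<forall>\<^sub>F t in at 0. 0 < \<psi> t"
    by (rule order_tendstoD) simp
  then obtain d where "0 < d" "\<And>t. t \<noteq> 0 \<Longrightarrow> dist t 0 < d \<Longrightarrow> 0 < \<psi> t"
    unfolding eventually_at by auto
  then show thesis
    using that[of "d / 2"] by simp
qed

lemma decay_const_pos:
  assumes "0 \<le> p"
  shows "0 < decay_const p"
proof -
  obtain t where "t \<noteq> 0" "0 < \<psi> t" by (rule obtain_nonzero_pos)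
  then have "0 < abs_pow t p * \<psi> t" by (simp add: abs_pow_def)
  also have "\<dots> \<le> decay_const p"
    using decay_bound_decay_const[OF bdd_above_decay[OF assms]] unfolding decay_bound_def by blast
  finally show ?thesis .
qed

lemma decay_const_zero: "decay_const 0 = 1"
proof (rule antisym)
  show "decay_const 0 \<le> 1" by (rule decay_const_le[OF decay_bound_zero])
  have "abs_pow 0 0 * \<psi> 0 \<le> decay_const 0"
    using decay_bound_decay_const[OF bdd_above_decay[of 0]] unfolding decay_bound_def by simp
  then show "1 \<le> decay_const 0" by (simp add: abs_pow_def at_zero)
qed

lemma decay_const_root_mono:
  assumes "0 < p" "p \<le> q"
  shows "decay_const p powr (1/p) \<le> decay_const q powr (1/q)"
proof -
  have "decay_bound q (decay_const q)"
    using assms by (intro decay_bound_decay_const bdd_above_decay) simp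
  then have "decay_const p \<le> decay_const q powr (p / q)"
    using assms by (intro decay_const_le decay_bound_interpolate)
  then have "decay_const p powr (1/p) \<le> (decay_const q powr (p / q)) powr (1/p)"
    using assms decay_const_pos[of p] by (intro powr_mono2) auto
  also have "\<dots> = decay_const q powr (1/q)"
    using assms by (simp add: powr_powr)
  finally show ?thesis .
qed

lemma decay_const_add_one_le:
  assumes "1 < p"
  shows "decay_const (p + 1) \<le> 2 powr (p + 1) * decay_const p powr (1 + 1/p) * (p / (p - 1))"
proof -
  define C where "C = decay_const p"
  have "0 < C" using assms decay_const_pos by (simp add: C_def)
  have "decay_bound p C"
    unfolding C_def using assms by (intro decay_bound_decay_const bdd_above_decay) simp
  then have "decay_bound (p + 1) (2 powr (p + 1) * C * (C powr (1/p) * p / (p - 1)))"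
    using assms \<open>0 < C\<close> by (intro decay_bound_add_one integral_le_of_decay_bound_gt_one) auto
  then have "decay_const (p + 1) \<le> 2 powr (p + 1) * C * (C powr (1/p) * p / (p - 1))"
    by (rule decay_const_le)
  also have "\<dots> = 2 powr (p + 1) * C powr (1 + 1/p) * (p / (p - 1))"
    using \<open>0 < C\<close> by (simp add: powr_add)
  finally show ?thesis unfolding C_def .
qed

end

lemma (in quicksort_limit) qs_modulus_cmod_char: "qs_modulus (\<lambda>t. cmod (char M t))"
proof
  show "continuous_on UNIV (\<lambda>t. cmod (char M t))"
    by (intro continuous_at_imp_continuous_on ballI continuous_intros isCont_char)
  show "cmod (char M t) \<le> 1" for t by (rule cmod_char_le_1)
  show "cmod (char M 0) = 1" by (simp add: char_zero)
  show "cmod (char M (- t)) = cmod (char M t)" for t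
  proof -
    have "(\<lambda>x. iexp (- t * x)) = (\<lambda>x. cnj (iexp (t * x)))"
      by (simp add: exp_cnj)
    then have "char M (- t) = cnj (char M t)"
      unfolding char_def by (simp add: Bochner_Integration.integral_cnj)
    then show ?thesis by simp
  qed
  show "cmod (char M t)
      \<le> integral {0..1} (\<lambda>u. cmod (char M (t * u)) * cmod (char M (t * (1 - u))))" for t
    by (rule cmod_char_le_integral)
  show "t \<noteq> 0 \<Longrightarrow> cmod (char M t) \<le> 2 / sqrt \<bar>t\<bar>" for t
    by (intro cmod_char_le_oscillatory norm_integral_iexp_qs_phase)
qed simp

theorem theorem2p1:
  fixes M :: "real measure"
  assumes "quicksort_limit_law M"
  shows "(\<forall>p\<ge>0. bdd_above (range (\<lambda>t. abs_pow t p * cmod (char M t))) \<and> 0 < qs_c M p)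
    \<and> qs_c M 0 = 1
    \<and> qs_c M (1/2) \<le> 2
    \<and> qs_c M (3/4) \<le> sqrt (8 * pi)
    \<and> qs_c M 1 \<le> 4 * pi
    \<and> qs_c M (3/2) < 187
    \<and> qs_c M (5/2) < 103215
    \<and> qs_c M (7/2) < 197102280
    \<and> (\<forall>p1 p2. 0 < p1 \<and> p1 \<le> p2 \<longrightarrow> qs_c M p1 powr (1/p1) \<le> qs_c M p2 powr (1/p2))
    \<and> (\<forall>p>1. qs_c M (p + 1) \<le> 2 powr (p + 1) * qs_c M p powr (1 + 1/p) * (p / (p - 1)))
    \<and> (\<forall>p>0. qs_c M p \<le> 2 powr (p^2 + 6*p))"
proof -
  interpret quicksort_limit M by unfold_locales (rule assms)
  interpret qs_modulus "\<lambda>t. cmod (char M t)" by (rule qs_modulus_cmod_char)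
  have qs_c: "qs_c M = decay_const"
    by (simp add: fun_eq_iff qs_c_def decay_const_def)
  have "decay_const (3/2) < 187" "decay_const (5/2) < 103215" "decay_const (7/2) < 197102280"
    using decay_const_le[OF decay_bound_three_halves] decay_const_le[OF decay_bound_five_halves]
      decay_const_le[OF decay_bound_seven_halves] by simp_all
  then show ?thesis
    unfolding qs_c
    using bdd_above_decay decay_const_pos decay_const_zero decay_const_root_mono decay_const_add_one_le
      decay_const_le[OF decay_bound_half] decay_const_le[OF decay_bound_three_quarters]
      decay_const_le[OF decay_bound_one] decay_const_le[OF decay_bound_two_powr]
    by simp
qed

end
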